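(* Let $(M,K)$ be a paracomplex manifold with \[H^1(M)=0,\quad H^2(M)=0,\quad H^{1,0}_+(M)=0,\quad H^{0,1}_-(M)=0.\] Then $H^{1,1}_{BC}(M)=0$.
   Context: A paracomplex manifold $(M,K)$ is a manifold with a splitting $TM=V\oplus H$ into two integrable distributions of equal rank, $K=\mathrm{id}_V-\mathrm{id}_H$. Differential forms split by type, $\Omega^{p,q}$ = sections of $\Lambda^pV^*\otimes\Lambda^qH^*$ (with $V^*$ the annihilator of $H$ and $H^*$ the annihilator of $V$), and by integrability $d=\partial_++\partial_-$ with $\partial_+\colon\Omega^{p,q}\to\Omega^{p+1,q}$, $\partial_-\colon\Omega^{p,q}\to\Omega^{p,q+1}$. $H^1(M),H^2(M)$ denote de Rham cohomology. The para-Dolbeault cohomologies are $H^{p,q}_+=\ker(\partial_+|_{\Omega^{p,q}})/\partial_+(\Omega^{p-1,q})$ and $H^{p,q}_-=\ker(\partial_-|_{\Omega^{p,q}})/\partial_-(\Omega^{p,q-1})$. $K$ acts on $\Omega^{p,q}$ by $(-1)^q$, $d^c=K\circ d\circ K$, and the Bott--Chern cohomology is $H^{1,1}_{BC}=\ker(d\colon\Omega^{1,1}\to\Omega^3)/\,dd^c(\Omega^{0,0})$. *)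

theory Defs
  imports "HOL-Analysis.Analysis"
begin

text \<open>Abstract model of the bigraded de Rham complex of a paracomplex manifold.
  Om p q is the space of (p,q)-forms, a subspace of an ambient real vector space of forms;
  dp, dm are the operators partial_+ and partial_-; K is the paracomplex structure acting
  on forms.\<close>

definition Lambda :: "(nat \<Rightarrow> nat \<Rightarrow> 'f::real_vector set) \<Rightarrow> nat \<Rightarrow> 'f set" where
  "Lambda Om k = {(\<Sum>p\<le>k. x p) | x. \<forall>p\<le>k. x p \<in> Om p (k - p)}"

definition dR :: "('f::real_vector \<Rightarrow> 'f) \<Rightarrow> ('f \<Rightarrow> 'f) \<Rightarrow> 'f \<Rightarrow> 'f" where
  "dR dp dm x = dp x + dm x"

definition paracomplex_forms ::
  "(nat \<Rightarrow> nat \<Rightarrow> 'f::real_vector set) \<Rightarrow> ('f \<Rightarrow> 'f) \<Rightarrow> ('f \<Rightarrow> 'f) \<Rightarrow> ('f \<Rightarrow> 'f) \<Rightarrow> bool" where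
  "paracomplex_forms Om dp dm K \<longleftrightarrow>
     (\<forall>p q. subspace (Om p q)) \<and> linear dp \<and> linear dm \<and> linear K \<and>
     (\<forall>p q x. x \<in> Om p q \<longrightarrow>
        dp x \<in> Om (Suc p) q \<and> dm x \<in> Om p (Suc q) \<and> K x = ((-1::real) ^ q) *\<^sub>R x \<and>
        dp (dp x) = 0 \<and> dm (dm x) = 0 \<and> dp (dm x) + dm (dp x) = 0) \<and>
     (\<forall>k (x::nat \<Rightarrow> 'f). (\<forall>p\<le>k. x p \<in> Om p (k - p)) \<and> (\<Sum>p\<le>k. x p) = 0
        \<longrightarrow> (\<forall>p\<le>k. x p = 0))"

definition deRham_vanishes where
  "deRham_vanishes Om dp dm k \<longleftrightarrow>
     (\<forall>\<omega>\<in>Lambda Om k. dR dp dm \<omega> = 0 \<longrightarrow> (\<exists>\<eta>\<in>Lambda Om (k - 1). \<omega> = dR dp dm \<eta>))"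

definition H10_plus_vanishes where
  "H10_plus_vanishes Om dp \<longleftrightarrow>
     (\<forall>\<omega>\<in>Om 1 0. dp \<omega> = 0 \<longrightarrow> (\<exists>f\<in>Om 0 0. \<omega> = dp f))"

definition H01_minus_vanishes where
  "H01_minus_vanishes Om dm \<longleftrightarrow>
     (\<forall>\<omega>\<in>Om 0 1. dm \<omega> = 0 \<longrightarrow> (\<exists>f\<in>Om 0 0. \<omega> = dm f))"

definition dc where "dc dp dm K x = K (dR dp dm (K x))"

definition H11_BC_vanishes where
  "H11_BC_vanishes Om dp dm K \<longleftrightarrow>
     (\<forall>\<omega>\<in>Om 1 1. dR dp dm \<omega> = 0 \<longrightarrow> (\<exists>f\<in>Om 0 0. \<omega> = dR dp dm (dc dp dm K f)))"

end

theory Submission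
  imports Defs
begin

text \<open>A d-closed (1,1)-form \<omega> is d-exact since H^2 = 0, say \<omega> = d(a + b) with a of type (0,1)
  and b of type (1,0).  Comparing bidegrees gives \<partial>_- a = 0, \<partial>_+ b = 0 and
  \<omega> = \<partial>_+ a + \<partial>_- b.  The para-Dolbeault hypotheses write a = \<partial>_- h and b = \<partial>_+ g, so
  \<omega> = \<partial>_+\<partial>_- (h - g) by anticommutation; on functions dd^c = -2 \<partial>_+\<partial>_-, hence
  \<omega> = dd^c ((g - h)/2).\<close>

locale paracomplex_complex =
  fixes Om :: "nat \<Rightarrow> nat \<Rightarrow> 'f::real_vector set"
    and dp dm K :: "'f \<Rightarrow> 'f"
  assumes paracomplex: "paracomplex_forms Om dp dm K"
begin

lemma Om_subspace: "subspace (Om p q)"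
  and linear_dp: "linear dp"
  and linear_dm: "linear dm"
  and linear_K: "linear K"
  and dp_Om: "x \<in> Om p q \<Longrightarrow> dp x \<in> Om (Suc p) q"
  and dm_Om: "x \<in> Om p q \<Longrightarrow> dm x \<in> Om p (Suc q)"
  and K_Om: "x \<in> Om p q \<Longrightarrow> K x = ((-1::real) ^ q) *\<^sub>R x"
  and dp_dp_zero: "x \<in> Om p q \<Longrightarrow> dp (dp x) = 0"
  and dm_dm_zero: "x \<in> Om p q \<Longrightarrow> dm (dm x) = 0"
  and dp_dm_anticomm: "x \<in> Om p q \<Longrightarrow> dp (dm x) + dm (dp x) = 0"
  using paracomplex unfolding paracomplex_forms_def by blast+

lemma bigraded_sum_zero:
  "\<forall>p\<le>k. c p \<in> Om p (k - p) \<Longrightarrow> (\<Sum>p\<le>k. c p) = 0 \<Longrightarrow> p \<le> k \<Longrightarrow> c p = 0"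
  using paracomplex unfolding paracomplex_forms_def by blast

lemma zero_Om: "0 \<in> Om p q"
  using Om_subspace subspace_0 by blast

lemma Om_subset_Lambda:
  assumes "x \<in> Om p q"
  shows "x \<in> Lambda Om (p + q)"
proof -
  have "x = (\<Sum>i\<le>p + q. if i = p then x else 0)"
    by simp
  moreover have "\<forall>i\<le>p + q. (if i = p then x else 0) \<in> Om i (p + q - i)"
    using assms zero_Om by auto
  ultimately show ?thesis
    unfolding Lambda_def by blast
qed

lemma Lambda_1_decompose:
  assumes "\<eta> \<in> Lambda Om 1"
  obtains a b where "a \<in> Om 0 1" "b \<in> Om 1 0" "\<eta> = a + b"
proof -
  obtain x where x: "\<forall>p\<le>1. x p \<in> Om p (1 - p)" and "\<eta> = (\<Sum>p\<le>1. x p)"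
    using assms unfolding Lambda_def by blast
  then have "\<eta> = x 0 + x 1"
    by (simp add: atMost_Suc add.commute)
  moreover have "x 0 \<in> Om 0 1" "x 1 \<in> Om 1 0"
    using x by auto
  ultimately show ?thesis
    using that by blast
qed

lemma bidegree_2_sum_zero:
  assumes "x \<in> Om 0 2" "y \<in> Om 1 1" "z \<in> Om 2 0" "x + y + z = 0"
  shows "x = 0" "y = 0" "z = 0"
proof -
  define c where "c p = (if p = 0 then x else if p = 1 then y else z)" for p :: nat
  have c_Om: "\<forall>p\<le>2. c p \<in> Om p (2 - p)"
    using assms(1-3) by (auto simp: c_def le_Suc_eq numeral_2_eq_2)
  have "(\<Sum>p\<le>2. c p) = 0"
    using assms(4) by (simp add: c_def numeral_2_eq_2 atMost_Suc algebra_simps)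
  then have "c p = 0" if "p \<le> 2" for p
    using bigraded_sum_zero[OF c_Om] that by blast
  from this[of 0] this[of 1] this[of 2] show "x = 0" "y = 0" "z = 0"
    by (simp_all add: c_def)
qed

lemma exact_11_form_components:
  assumes \<omega>: "\<omega> \<in> Om 1 1" and a: "a \<in> Om 0 1" and b: "b \<in> Om 1 0"
    and exact: "\<omega> = dR dp dm (a + b)"
  shows "dm a = 0" "dp b = 0" "\<omega> = dp a + dm b"
proof -
  have "dp a + dm b - \<omega> \<in> Om 1 1"
    using dp_Om[OF a] dm_Om[OF b] \<omega> Om_subspace by (simp add: subspace_add subspace_diff)
  moreover have "dm a + (dp a + dm b - \<omega>) + dp b = 0"
    using exact linear_dp linear_dm by (simp add: dR_def linear_add algebra_simps)
  moreover have "dm a \<in> Om 0 2" "dp b \<in> Om 2 0"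
    using dm_Om[OF a] dp_Om[OF b] by (simp_all add: numeral_2_eq_2)
  ultimately have "dm a = 0" "dp a + dm b - \<omega> = 0" "dp b = 0"
    using bidegree_2_sum_zero by blast+
  then show "dm a = 0" "dp b = 0" "\<omega> = dp a + dm b"
    by simp_all
qed

lemma dc_Om00:
  assumes "f \<in> Om 0 0"
  shows "dc dp dm K f = dp f - dm f"
proof -
  have "K (dp f) = dp f" "K (dm f) = - dm f"
    using K_Om[OF dp_Om[OF assms]] K_Om[OF dm_Om[OF assms]] by simp_all
  then show ?thesis
    using K_Om[OF assms] linear_K by (simp add: dc_def dR_def linear_add)
qed

lemma ddc_Om00:
  assumes "f \<in> Om 0 0"
  shows "dR dp dm (dc dp dm K f) = - 2 *\<^sub>R dp (dm f)"
proof -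
  have "dR dp dm (dc dp dm K f) = dm (dp f) - dp (dm f)"
    using dc_Om00[OF assms] dp_dp_zero[OF assms] dm_dm_zero[OF assms] linear_dp linear_dm
    by (simp add: dR_def linear_diff)
  also have "\<dots> = - 2 *\<^sub>R dp (dm f)"
    using dp_dm_anticomm[OF assms] by (simp add: eq_neg_iff_add_eq_0 scaleR_2 algebra_simps)
  finally show ?thesis .
qed

lemma exact_11_form_is_ddc:
  assumes \<omega>: "\<omega> \<in> Om 1 1" and exact: "\<omega> = dR dp dm \<eta>" "\<eta> \<in> Lambda Om 1"
    and H10: "H10_plus_vanishes Om dp" and H01: "H01_minus_vanishes Om dm"
  shows "\<exists>f\<in>Om 0 0. \<omega> = dR dp dm (dc dp dm K f)"
proof -
  obtain a b where a: "a \<in> Om 0 1" and b: "b \<in> Om 1 0" and \<eta>: "\<eta> = a + b"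
    using Lambda_1_decompose[OF exact(2)] .
  note components = exact_11_form_components[OF \<omega> a b exact(1)[unfolded \<eta>]]
  obtain g where g: "g \<in> Om 0 0" "b = dp g"
    using H10 b components(2) unfolding H10_plus_vanishes_def by blast
  obtain h where h: "h \<in> Om 0 0" "a = dm h"
    using H01 a components(1) unfolding H01_minus_vanishes_def by blast
  define f where "f = (1/2::real) *\<^sub>R (g - h)"
  have f: "f \<in> Om 0 0"
    unfolding f_def using g h Om_subspace by (simp add: subspace_diff subspace_scale)
  have "\<omega> = dp (dm h) - dp (dm g)"
    using components(3) g h dp_dm_anticomm[OF g(1)] by (simp add: eq_neg_iff_add_eq_0 add.commute)
  also have "\<dots> = - 2 *\<^sub>R dp (dm f)"
    using linear_dp linear_dm by (simp add: f_def linear_scale linear_diff)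
  also have "\<dots> = dR dp dm (dc dp dm K f)"
    using ddc_Om00[OF f] by simp
  finally show ?thesis
    using f by blast
qed

end

theorem theorem6p5:
  fixes Om :: "nat \<Rightarrow> nat \<Rightarrow> 'f::real_vector set"
    and dp dm K :: "'f \<Rightarrow> 'f"
  assumes "paracomplex_forms Om dp dm K"
    and "deRham_vanishes Om dp dm 1"
    and "deRham_vanishes Om dp dm 2"
    and "H10_plus_vanishes Om dp"
    and "H01_minus_vanishes Om dm"
  shows "H11_BC_vanishes Om dp dm K"
proof -
  interpret paracomplex_complex Om dp dm K
    using assms(1) by unfold_locales
  show ?thesis
    unfolding H11_BC_vanishes_def
  proof (intro ballI impI)
    fix \<omega> assume \<omega>: "\<omega> \<in> Om 1 1" and closed: "dR dp dm \<omega> = 0"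
    obtain \<eta> where "\<eta> \<in> Lambda Om 1" "\<omega> = dR dp dm \<eta>"
      using assms(3) Om_subset_Lambda[OF \<omega>] closed unfolding deRham_vanishes_def
      by (auto simp: numeral_2_eq_2)
    then show "\<exists>f\<in>Om 0 0. \<omega> = dR dp dm (dc dp dm K f)"
      using exact_11_form_is_ddc \<omega> assms(4,5) by blast
  qed
qed

end
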